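(* Let $S=(\mathcal{E},\Sigma,X,\mathcal{O})$ and $S'=(\mathcal{E}',\Sigma',X',\mathcal{O}')$ be entities such that $S$ is a sub entity of $S'$ with connecting functions $m,n,l$. Then $m$ and $n$ are continuous for the eigen closure systems: if $F\in\mathcal{F}_{eig}$ then $m^{-1}(F)\in\mathcal{F}'_{eig}$, and if $G'\in\mathcal{G}'_{eig}$ then $n^{-1}(G')\in\mathcal{G}_{eig}$.
   Context: An entity $S=(\mathcal{E},\Sigma,X,\mathcal{O})$ consists of sets $\mathcal{E}$ (experiments), $\Sigma$ (states) and for each $e\in\mathcal{E},p\in\Sigma$ a nonempty set $O(e,p)$, with $X=\bigcup O(e,p)$; $O(e)=\bigcup_pO(e,p)$, $O(p)=\bigcup_eO(e,p)$. $S$ is a sub entity of $S'$ iff there are a surjective function $m:\Sigma'\to\Sigma$, an injective function $n:\mathcal{E}\to\mathcal{E}'$ and an injective function $l:X\to X'$ such that for each $p'\in\Sigma'$ and $e\in\mathcal{E}$, $l$ maps $O(e,m(p'))$ onto $O'(n(e),p')$, i.e. $l(O(e,m(p')))=O'(n(e),p')$. State eigen closure system: for $e\in\mathcal{E}$, $eig_e(A)=\{p\in\Sigma:O(e,p)\subseteq A\}$ ($A\subseteq O(e)$), $\mathcal{F}(e)=\{eig_e(A)\}$, and $\mathcal{F}_{eig}$ is the set of intersections of families of elements of $\bigcup_e\mathcal{F}(e)$. Experiment eigen closure system: for $p\in\Sigma$, $eig_p(A)=\{e\in\mathcal{E}:O(e,p)\subseteq A\}$ ($A\subseteq O(p)$),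 $\mathcal{G}(p)=\{eig_p(A)\}$, and $\mathcal{G}_{eig}$ is the set of intersections of families of elements of $\bigcup_p\mathcal{G}(p)$. Primed objects are defined analogously for $S'$. *)

theory Defs
  imports Main
begin

text \<open>An entity is given by a set of experiments E, a set of states St and an
outcome assignment Q; Q e p is the (nonempty) outcome set of e in state p.\<close>

definition entity :: "'e set \<Rightarrow> 'p set \<Rightarrow> ('e \<Rightarrow> 'p \<Rightarrow> 'x set) \<Rightarrow> bool" where
  "entity E St Q \<longleftrightarrow> (\<forall>e\<in>E. \<forall>p\<in>St. Q e p \<noteq> {})"

definition outcomes :: "'e set \<Rightarrow> 'p set \<Rightarrow> ('e \<Rightarrow> 'p \<Rightarrow> 'x set) \<Rightarrow> 'x set" where
  "outcomes E St Q = (\<Union>e\<in>E. \<Union>p\<in>St. Q e p)"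

definition outcomes_exp :: "'p set \<Rightarrow> ('e \<Rightarrow> 'p \<Rightarrow> 'x set) \<Rightarrow> 'e \<Rightarrow> 'x set" where
  "outcomes_exp St Q e = (\<Union>p\<in>St. Q e p)"

definition outcomes_state :: "'e set \<Rightarrow> ('e \<Rightarrow> 'p \<Rightarrow> 'x set) \<Rightarrow> 'p \<Rightarrow> 'x set" where
  "outcomes_state E Q p = (\<Union>e\<in>E. Q e p)"

definition sub_entity_via ::
  "'e set \<Rightarrow> 'p set \<Rightarrow> ('e \<Rightarrow> 'p \<Rightarrow> 'x set) \<Rightarrow>
   'e2 set \<Rightarrow> 'p2 set \<Rightarrow> ('e2 \<Rightarrow> 'p2 \<Rightarrow> 'x2 set) \<Rightarrow>
   ('p2 \<Rightarrow> 'p) \<Rightarrow> ('e \<Rightarrow> 'e2) \<Rightarrow> ('x \<Rightarrow> 'x2) \<Rightarrow> bool" where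
  "sub_entity_via E St Q E' St' Q' m n l \<longleftrightarrow>
     m ` St' = St \<and>
     n ` E \<subseteq> E' \<and> inj_on n E \<and>
     l ` outcomes E St Q \<subseteq> outcomes E' St' Q' \<and> inj_on l (outcomes E St Q) \<and>
     (\<forall>p'\<in>St'. \<forall>e\<in>E. l ` Q e (m p') = Q' (n e) p')"

definition eig_state :: "'p set \<Rightarrow> ('e \<Rightarrow> 'p \<Rightarrow> 'x set) \<Rightarrow> 'e \<Rightarrow> 'x set \<Rightarrow> 'p set" where
  "eig_state St Q e A = {p \<in> St. Q e p \<subseteq> A}"

definition F_exp :: "'p set \<Rightarrow> ('e \<Rightarrow> 'p \<Rightarrow> 'x set) \<Rightarrow> 'e \<Rightarrow> 'p set set" where
  "F_exp St Q e = {eig_state St Q e A | A. A \<subseteq> outcomes_exp St Q e}"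

text \<open>Intersections of families (the empty family has intersection St).\<close>
definition F_eig :: "'e set \<Rightarrow> 'p set \<Rightarrow> ('e \<Rightarrow> 'p \<Rightarrow> 'x set) \<Rightarrow> 'p set set" where
  "F_eig E St Q = {St \<inter> \<Inter>\<A> | \<A>. \<A> \<subseteq> (\<Union>e\<in>E. F_exp St Q e)}"

definition eig_exp :: "'e set \<Rightarrow> ('e \<Rightarrow> 'p \<Rightarrow> 'x set) \<Rightarrow> 'p \<Rightarrow> 'x set \<Rightarrow> 'e set" where
  "eig_exp E Q p A = {e \<in> E. Q e p \<subseteq> A}"

definition G_state :: "'e set \<Rightarrow> ('e \<Rightarrow> 'p \<Rightarrow> 'x set) \<Rightarrow> 'p \<Rightarrow> 'e set set" where
  "G_state E Q p = {eig_exp E Q p A | A. A \<subseteq> outcomes_state E Q p}"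

definition G_eig :: "'e set \<Rightarrow> 'p set \<Rightarrow> ('e \<Rightarrow> 'p \<Rightarrow> 'x set) \<Rightarrow> 'e set set" where
  "G_eig E St Q = {E \<inter> \<Inter>\<A> | \<A>. \<A> \<subseteq> (\<Union>p\<in>St. G_state E Q p)}"

end

theory Submission
  imports Defs
begin

text \<open>The outcome set of e at m p' is carried by the injective map l onto the outcome set of
n e at p'. Hence the m-preimage of the eigen set eig_e(A) is the eigen set eig_(n e)(l(A)), and
the n-preimage of eig_p'(B) is eig_(m p')(l^-1(B)). Preimages commute with intersections, so the
closure systems generated by the eigen sets are pulled back as well.\<close>

lemma preimage_Inter_closure:
  assumes "f ` U' \<subseteq> U"
    and "\<And>a. a \<in> \<G> \<Longrightarrow> {x \<in> U'. f x \<in> a} \<in> \<G>'"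
    and "\<A> \<subseteq> \<G>"
  shows "{x \<in> U'. f x \<in> U \<inter> \<Inter>\<A>} \<in> {U' \<inter> \<Inter>\<B> | \<B>. \<B> \<subseteq> \<G>'}"
proof -
  let ?\<B> = "(\<lambda>a. {x \<in> U'. f x \<in> a}) ` \<A>"
  have "{x \<in> U'. f x \<in> U \<inter> \<Inter>\<A>} = U' \<inter> \<Inter>?\<B>"
    using assms(1) by auto
  moreover have "?\<B> \<subseteq> \<G>'"
    using assms(2,3) by auto
  ultimately show ?thesis by blast
qed

lemma F_exp_eq_range: "F_exp St Q e = range (eig_state St Q e)"
proof -
  have "eig_state St Q e A = eig_state St Q e (A \<inter> outcomes_exp St Q e)" for A
    by (auto simp: eig_state_def outcomes_exp_def)
  then show ?thesis
    unfolding F_exp_def by blast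
qed

lemma G_state_eq_range: "G_state E Q p = range (eig_exp E Q p)"
proof -
  have "eig_exp E Q p A = eig_exp E Q p (A \<inter> outcomes_state E Q p)" for A
    by (auto simp: eig_exp_def outcomes_state_def)
  then show ?thesis
    unfolding G_state_def by blast
qed

lemma sub_entity_via_state_map:
  "sub_entity_via E St Q E' St' Q' m n l \<Longrightarrow> m ` St' \<subseteq> St"
  by (simp add: sub_entity_via_def)

lemma sub_entity_via_exp_map:
  "sub_entity_via E St Q E' St' Q' m n l \<Longrightarrow> n ` E \<subseteq> E'"
  by (simp add: sub_entity_via_def)

lemma sub_entity_via_image_outcomes:
  "\<lbrakk>sub_entity_via E St Q E' St' Q' m n l; p' \<in> St'; e \<in> E\<rbrakk>
   \<Longrightarrow> l ` Q e (m p') = Q' (n e) p'"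
  by (simp add: sub_entity_via_def)

lemma sub_entity_via_preimage_eig_state:
  assumes S: "sub_entity_via E St Q E' St' Q' m n l"
    and e: "e \<in> E" and A: "A \<subseteq> outcomes E St Q"
  shows "{p' \<in> St'. m p' \<in> eig_state St Q e A} = eig_state St' Q' (n e) (l ` A)"
proof -
  have inj: "inj_on l (outcomes E St Q)"
    using S by (simp add: sub_entity_via_def)
  have "Q e (m p') \<subseteq> A \<longleftrightarrow> Q' (n e) p' \<subseteq> l ` A" if p': "p' \<in> St'" for p'
  proof -
    have "Q e (m p') \<subseteq> outcomes E St Q"
      using sub_entity_via_state_map[OF S] p' e by (auto simp: outcomes_def)
    then have "Q e (m p') \<subseteq> A \<longleftrightarrow> l ` Q e (m p') \<subseteq> l ` A"
      using inj_on_image_mem_iff[OF inj _ A] by blast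
    then show ?thesis
      by (simp add: sub_entity_via_image_outcomes[OF S p' e])
  qed
  then show ?thesis
    using sub_entity_via_state_map[OF S] by (auto simp: eig_state_def)
qed

lemma sub_entity_via_preimage_eig_exp:
  assumes S: "sub_entity_via E St Q E' St' Q' m n l" and p': "p' \<in> St'"
  shows "{e \<in> E. n e \<in> eig_exp E' Q' p' B} = eig_exp E Q (m p') (l -` B)"
proof -
  have "Q' (n e) p' \<subseteq> B \<longleftrightarrow> Q e (m p') \<subseteq> l -` B" if e: "e \<in> E" for e
    using sub_entity_via_image_outcomes[OF S p' e] by (metis image_subset_iff_subset_vimage)
  then show ?thesis
    using sub_entity_via_exp_map[OF S] by (auto simp: eig_exp_def)
qed

lemma sub_entity_via_preimage_F_exp:
  assumes S: "sub_entity_via E St Q E' St' Q' m n l"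
    and e: "e \<in> E" and a: "a \<in> F_exp St Q e"
  shows "{p' \<in> St'. m p' \<in> a} \<in> F_exp St' Q' (n e)"
proof -
  obtain A where A: "A \<subseteq> outcomes_exp St Q e" and a_eq: "a = eig_state St Q e A"
    using a unfolding F_exp_def by blast
  have "A \<subseteq> outcomes E St Q"
    using A e by (auto simp: outcomes_def outcomes_exp_def)
  then show ?thesis
    by (simp add: a_eq sub_entity_via_preimage_eig_state[OF S e] F_exp_eq_range)
qed

lemma sub_entity_via_preimage_G_state:
  assumes S: "sub_entity_via E St Q E' St' Q' m n l"
    and p': "p' \<in> St'" and b: "b \<in> G_state E' Q' p'"
  shows "{e \<in> E. n e \<in> b} \<in> G_state E Q (m p')"
  using b sub_entity_via_preimage_eig_exp[OF S p']
  by (auto simp: G_state_eq_range)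

lemma sub_entity_via_preimage_F_eig:
  assumes S: "sub_entity_via E St Q E' St' Q' m n l" and F: "F \<in> F_eig E St Q"
  shows "{p' \<in> St'. m p' \<in> F} \<in> F_eig E' St' Q'"
proof -
  obtain \<A> where \<A>: "\<A> \<subseteq> (\<Union>e\<in>E. F_exp St Q e)" and F_eq: "F = St \<inter> \<Inter>\<A>"
    using F unfolding F_eig_def by blast
  have generators: "{p' \<in> St'. m p' \<in> a} \<in> (\<Union>e\<in>E'. F_exp St' Q' e)"
    if a: "a \<in> (\<Union>e\<in>E. F_exp St Q e)" for a
  proof -
    obtain e where "e \<in> E" and "a \<in> F_exp St Q e"
      using a by blast
    then have "n e \<in> E'" and "{p' \<in> St'. m p' \<in> a} \<in> F_exp St' Q' (n e)"
      using sub_entity_via_exp_map[OF S] sub_entity_via_preimage_F_exp[OF S] by auto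
    then show ?thesis by blast
  qed
  show ?thesis
    using preimage_Inter_closure[OF sub_entity_via_state_map[OF S] generators \<A>]
    unfolding F_eig_def F_eq .
qed

lemma sub_entity_via_preimage_G_eig:
  assumes S: "sub_entity_via E St Q E' St' Q' m n l" and G': "G' \<in> G_eig E' St' Q'"
  shows "{e \<in> E. n e \<in> G'} \<in> G_eig E St Q"
proof -
  obtain \<A> where \<A>: "\<A> \<subseteq> (\<Union>p'\<in>St'. G_state E' Q' p')" and G'_eq: "G' = E' \<inter> \<Inter>\<A>"
    using G' unfolding G_eig_def by blast
  have generators: "{e \<in> E. n e \<in> b} \<in> (\<Union>p\<in>St. G_state E Q p)"
    if b: "b \<in> (\<Union>p'\<in>St'. G_state E' Q' p')" for b
  proof -
    obtain p' where "p' \<in> St'" and "b \<in> G_state E' Q' p'"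
      using b by blast
    then have "m p' \<in> St" and "{e \<in> E. n e \<in> b} \<in> G_state E Q (m p')"
      using sub_entity_via_state_map[OF S] sub_entity_via_preimage_G_state[OF S] by auto
    then show ?thesis by blast
  qed
  show ?thesis
    using preimage_Inter_closure[OF sub_entity_via_exp_map[OF S] generators \<A>]
    unfolding G_eig_def G'_eq .
qed

theorem mainTheorem14:
  fixes E :: "'e set" and St :: "'p set" and Q :: "'e \<Rightarrow> 'p \<Rightarrow> 'x set"
    and E' :: "'e2 set" and St' :: "'p2 set" and Q' :: "'e2 \<Rightarrow> 'p2 \<Rightarrow> 'x2 set"
    and m :: "'p2 \<Rightarrow> 'p" and n :: "'e \<Rightarrow> 'e2" and l :: "'x \<Rightarrow> 'x2"
  assumes "entity E St Q" and "entity E' St' Q'"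
    and "sub_entity_via E St Q E' St' Q' m n l"
  shows "(\<forall>F \<in> F_eig E St Q. {p' \<in> St'. m p' \<in> F} \<in> F_eig E' St' Q') \<and>
         (\<forall>G' \<in> G_eig E' St' Q'. {e \<in> E. n e \<in> G'} \<in> G_eig E St Q)"
  using sub_entity_via_preimage_F_eig[OF assms(3)] sub_entity_via_preimage_G_eig[OF assms(3)]
  by blast

end
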